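(* Let $k\in\mathbb{N}_0$, $n=2k+1$, $a<b$, $N\ge1$ an integer, $h=(b-a)/N$, and grid points $x_j=a+jh$, $0\le j\le N$. Let $\phi\in C^k([a,b])$ with $\phi^{(k)}$ absolutely continuous (so $\phi^{(k+1)}$ is integrable). Let $P_k^+\phi$ be the function which on each cell $[x_j,x_{j+1}]$ is the polynomial of degree $\le n$ interpolating $\phi^{(\ell)}(x_j)$ and $\phi^{(\ell)}(x_{j+1})$ for $\ell=0,\dots,k$. Then $$\int_a^b(P_k^+\phi)(x)\,dx=\int_a^b\phi(x)\,dx-h^{k+1}\int_a^b E_k\Big(\frac{x-a}{h}\Big)\phi^{(k+1)}(x)\,dx,$$ where $E_k(z)=\mu_k(z\bmod 1)$ is the $1$-periodic extension of $\mu_k(x)=\frac{d^{k+1}}{dx^{k+1}}\Big[\frac{1}{(n+1)!}x^{k+1}(1-x)^{k+1}\Big]$, $x\in[0,1]$.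
   Context: $f^{(j)}$ denotes the $j$-th derivative of $f$. $P_k^+\phi$ is the piecewise cubic ($k=1$), quintic ($k=2$), etc., Hermite interpolant of $\phi$ on the uniform grid, using values and derivatives up to order $k$ at grid points. *)

theory Defs
  imports "HOL-Analysis.Analysis" "HOL-Computational_Algebra.Polynomial"
begin

definition abs_cont_on :: "real \<Rightarrow> real \<Rightarrow> (real \<Rightarrow> real) \<Rightarrow> bool" where
  "abs_cont_on a b f \<longleftrightarrow>
     (\<forall>e>0. \<exists>d>0. \<forall>(m::nat) (u::nat \<Rightarrow> real) (v::nat \<Rightarrow> real).
        (\<forall>i<m. a \<le> u i \<and> u i \<le> v i \<and> v i \<le> b) \<longrightarrow>
        (\<forall>i<m. \<forall>j<m. i \<noteq> j \<longrightarrow> v i \<le> u j \<or> v j \<le> u i) \<longrightarrow>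
        (\<Sum>i<m. v i - u i) < d \<longrightarrow>
        (\<Sum>i<m. \<bar>f (v i) - f (u i)\<bar>) < e)"

definition hermite_cell :: "nat \<Rightarrow> (nat \<Rightarrow> real \<Rightarrow> real) \<Rightarrow> real \<Rightarrow> real \<Rightarrow> real poly" where
  "hermite_cell k Df x0 x1 =
     (THE p. degree p \<le> 2*k+1 \<and>
        (\<forall>l\<le>k. poly ((pderiv ^^ l) p) x0 = Df l x0 \<and> poly ((pderiv ^^ l) p) x1 = Df l x1))"

text \<open>Index of the grid cell containing x (cells [x_j, x_{j+1}], j = 0..N-1; the
  right endpoint b is assigned to the last cell).\<close>
definition cell_index :: "real \<Rightarrow> real \<Rightarrow> nat \<Rightarrow> real \<Rightarrow> nat" where
  "cell_index a b N x = nat (min \<lfloor>(x - a) / ((b - a) / real N)\<rfloor> (int N - 1))"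

definition hermite_pw :: "nat \<Rightarrow> real \<Rightarrow> real \<Rightarrow> nat \<Rightarrow> (nat \<Rightarrow> real \<Rightarrow> real) \<Rightarrow> real \<Rightarrow> real" where
  "hermite_pw k a b N Df x =
     (let h = (b - a) / real N; j = cell_index a b N x
      in poly (hermite_cell k Df (a + real j * h) (a + real (Suc j) * h)) x)"

definition mu :: "nat \<Rightarrow> real \<Rightarrow> real" where
  "mu k x = poly ((pderiv ^^ (k+1))
       (smult (1 / fact (2*k+2)) ([:0, 1:] ^ (k+1) * [:1, -1:] ^ (k+1)))) x"

definition E :: "nat \<Rightarrow> real \<Rightarrow> real" where
  "E k z = mu k (frac z)"

end

theory Submission
  imports Defs "HOL-Computational_Algebra.Polynomial_Factorial" "HOL-Computational_Algebra.Field_as_Ring"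
begin

text \<open>
  On a cell \<open>[c, c + h]\<close> put \<open>W(x) = (x - c)^(k+1) (c + h - x)^(k+1) / (2k+2)!\<close> and let \<open>P\<close> be the
  Hermite interpolant.  The error \<open>\<psi> = \<phi> - P\<close> and its first \<open>k\<close> derivatives vanish at both
  nodes, and so do the first \<open>k\<close> derivatives of \<open>W\<close>.  Integrating \<open>W\<^sup>(\<^sup>k\<^sup>+\<^sup>1\<^sup>) \<psi>\<^sup>(\<^sup>k\<^sup>+\<^sup>1\<^sup>)\<close>
  by parts \<open>k+1\<close> times therefore gives exactly \<open>\<integral> \<psi>\<close>, since \<open>W\<^sup>(\<^sup>2\<^sup>k\<^sup>+\<^sup>2\<^sup>) = (-1)^(k+1)\<close>;
  moreover \<open>W\<^sup>(\<^sup>k\<^sup>+\<^sup>1\<^sup>)(x) = h^(k+1) mu k ((x - c) / h)\<close> and \<open>P\<^sup>(\<^sup>k\<^sup>+\<^sup>1\<^sup>)\<close> integrates to zero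
  against it.  Summing over the cells gives the theorem, because \<open>E k ((x - a) / h)\<close> coincides
  with the shifted kernel on every cell.
\<close>

text \<open>\<open>content\<close> below always denotes the measure of an interval, not the polynomial content.\<close>

hide_const (open) Polynomial.content

section \<open>Iterated derivatives of polynomials\<close>

lemma higher_pderiv_diff:
  "(pderiv ^^ n) (p - q) = (pderiv ^^ n) p - (pderiv ^^ n) (q :: 'a :: idom poly)"
  by (induction n arbitrary: p q) (simp_all del: funpow.simps add: funpow_Suc_right pderiv_diff)

lemma higher_pderiv_top:
  fixes p :: "real poly"
  assumes "degree p \<le> n"
  shows "(pderiv ^^ n) p = [:coeff p n * fact n:]"
proof -
  have "degree ((pderiv ^^ n) p) = 0"
    using assms by (simp add: degree_higher_pderiv)
  then have "(pderiv ^^ n) p = [:coeff ((pderiv ^^ n) p) 0:]"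
    by (rule degree_0_id[symmetric])
  also have "coeff ((pderiv ^^ n) p) 0 = coeff p n * fact n"
    by (simp add: coeff_higher_pderiv pochhammer_fact)
  finally show ?thesis .
qed

lemma higher_pderiv_beyond_degree:
  fixes p :: "real poly"
  assumes "degree p < n"
  shows "(pderiv ^^ n) p = 0"
  using higher_pderiv_top[of p n] assms by (simp add: coeff_eq_0)

lemma higher_pderiv_root:
  fixes p :: "'a :: {idom, semiring_char_0} poly"
  assumes "[:-r, 1:] ^ n dvd p" "m < n"
  shows "poly ((pderiv ^^ m) p) r = 0"
  using assms
proof (induction m arbitrary: n p)
  case 0
  then show ?case by (auto elim!: dvdE simp: power_0_left)
next
  case (Suc m)
  obtain n' where n: "n = Suc n'" using Suc.prems(2) by (cases n) auto
  obtain q where q: "p = [:-r, 1:] ^ n * q" using Suc.prems(1) by (auto elim: dvdE)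
  have "pderiv p = [:-r, 1:] ^ n' * ([:-r, 1:] * pderiv q + smult (of_nat n) q)"
    unfolding q n lemma_order_pderiv1 by (simp add: algebra_simps)
  then have "[:-r, 1:] ^ n' dvd pderiv p" by simp
  then show ?case
    using Suc.IH[of n' "pderiv p"] Suc.prems(2) n by (simp add: funpow_Suc_right del: funpow.simps)
qed

lemma root_order_from_higher_pderivs:
  fixes q :: "real poly"
  assumes "q \<noteq> 0" "\<forall>l\<le>k. poly ((pderiv ^^ l) q) c = 0"
  shows "k < order c q"
  using assms
proof (induction k arbitrary: q)
  case 0
  then show ?case using order_root[of q c] by auto
next
  case (Suc k)
  have root: "poly q c = 0" using Suc.prems(2) by (metis funpow_0 zero_le)
  show ?case
  proof (cases "pderiv q = 0")
    case True
    then obtain a where "q = [:a:]" using pderiv_iszero by blast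
    then show ?thesis using root Suc.prems(1) by simp
  next
    case False
    have "\<forall>l\<le>k. poly ((pderiv ^^ l) (pderiv q)) c = 0"
      using Suc.prems(2) by (metis Suc_le_mono funpow_Suc_right comp_apply)
    from Suc.IH[OF False this] order_pderiv[OF Suc.prems(1) root] show ?thesis by simp
  qed
qed

lemma higher_pderivs_vanish_dvd:
  fixes q :: "real poly"
  assumes "\<forall>l\<le>k. poly ((pderiv ^^ l) q) c = 0"
  shows "[:-c, 1:] ^ Suc k dvd q"
proof (cases "q = 0")
  case False
  then show ?thesis
    using root_order_from_higher_pderivs[OF False assms] order_divides[of c "Suc k" q] by simp
qed simp

section \<open>Two-point Hermite interpolation\<close>

lemma coprime_linear_powers:
  fixes c d :: real
  assumes "c \<noteq> d"
  shows "coprime ([:-c, 1:] ^ m) ([:-d, 1:] ^ n)"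
proof -
  have "coprime [:-c, 1:] [:-d, 1:]"
  proof (rule coprimeI)
    fix z assume "z dvd [:-c, 1:]" "z dvd [:-d, 1:]"
    then have "z dvd [:-c, 1:] - [:-d, 1:]" by (rule dvd_diff)
    moreover have "is_unit ([:-c, 1:] - [:-d, 1:])"
      using assms by (simp add: is_unit_triv)
    ultimately show "is_unit z" by (rule dvd_unit_imp_unit)
  qed
  then show ?thesis by (simp add: coprime_power_left_iff coprime_power_right_iff)
qed

lemma degree_two_point_product:
  "degree ([:-c, 1:] ^ Suc k * [:-d, 1:] ^ Suc k :: real poly) = 2 * k + 2"
  by (subst degree_mult_eq) (auto simp: degree_linear_power simp del: power_Suc)

text \<open>Every finite jet of derivatives at a point is realised by a polynomial, built one order at
  a time by adding multiples of \<open>(x - c)^l\<close>.\<close>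

lemma taylor_poly_exists:
  fixes D :: "nat \<Rightarrow> real"
  shows "\<exists>A. \<forall>l\<le>k. poly ((pderiv ^^ l) A) c = D l"
proof (induction k)
  case 0
  show ?case by (rule exI[of _ "[:D 0:]"]) simp
next
  case (Suc k)
  then obtain A where A: "\<forall>l\<le>k. poly ((pderiv ^^ l) A) c = D l" by blast
  define X :: "real poly" where "X = [:-c, 1:] ^ Suc k"
  define t where "t = (D (Suc k) - poly ((pderiv ^^ Suc k) A) c) / fact (Suc k)"
  have X_low: "poly ((pderiv ^^ l) X) c = 0" if "l \<le> k" for l
    unfolding X_def using higher_pderiv_root[of c "Suc k" "[:-c, 1:] ^ Suc k" l] that by simp
  have X_top: "(pderiv ^^ Suc k) X = [:fact (Suc k):]"
    unfolding X_def
    by (subst higher_pderiv_top) (simp_all add: degree_linear_power coeff_linear_power del: power_Suc)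
  have "poly ((pderiv ^^ l) (A + smult t X)) c = D l" if "l \<le> Suc k" for l
  proof (cases "l = Suc k")
    case True
    then show ?thesis using X_top by (simp add: higher_pderiv_add higher_pderiv_smult t_def del: funpow.simps)
  next
    case False
    then show ?thesis using that A X_low by (simp add: higher_pderiv_add higher_pderiv_smult)
  qed
  then show ?case by blast
qed

text \<open>Two Hermite interpolants of the same data at two distinct nodes coincide: their difference
  has degree at most \<open>2k+1\<close> but is divisible by \<open>(x-c)^(k+1) (x-d)^(k+1)\<close>.\<close>

lemma hermite_unique:
  fixes p q :: "real poly"
  assumes "c \<noteq> d" "degree p \<le> 2*k+1" "degree q \<le> 2*k+1"
    and "\<forall>l\<le>k. poly ((pderiv ^^ l) p) c = poly ((pderiv ^^ l) q) c"
    and "\<forall>l\<le>k. poly ((pderiv ^^ l) p) d = poly ((pderiv ^^ l) q) d"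
  shows "p = q"
proof (rule ccontr)
  define r where "r = p - q"
  assume "p \<noteq> q"
  then have "r \<noteq> 0" by (simp add: r_def)
  have "[:-c, 1:] ^ Suc k dvd r"
    by (rule higher_pderivs_vanish_dvd) (use assms(4) in \<open>simp add: r_def higher_pderiv_diff\<close>)
  moreover have "[:-d, 1:] ^ Suc k dvd r"
    by (rule higher_pderivs_vanish_dvd) (use assms(5) in \<open>simp add: r_def higher_pderiv_diff\<close>)
  ultimately have "[:-c, 1:] ^ Suc k * [:-d, 1:] ^ Suc k dvd r"
    using coprime_linear_powers[OF assms(1)] by (blast intro: divides_mult)
  then have "2 * k + 2 \<le> degree r"
    using dvd_imp_degree_le \<open>r \<noteq> 0\<close> degree_two_point_product[of c k d] by metis
  moreover have "degree r \<le> 2*k+1"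
    unfolding r_def using degree_diff_le[of p "2*k+1" q] assms(2,3) by simp
  ultimately show False by simp
qed

text \<open>Existence: glue Taylor polynomials \<open>A\<close> at \<open>c\<close> and \<open>B\<close> at \<open>d\<close> with a Bezout identity
  \<open>u X\<^sub>c + w X\<^sub>d = 1\<close> for the coprime factors \<open>X\<^sub>c = (x-c)^(k+1)\<close>, \<open>X\<^sub>d = (x-d)^(k+1)\<close>, and
  reduce modulo \<open>X\<^sub>c X\<^sub>d\<close> to bring the degree below \<open>2k+2\<close>.\<close>

lemma hermite_exists:
  fixes c d :: real and D :: "nat \<Rightarrow> real \<Rightarrow> real"
  assumes "c \<noteq> d"
  shows "\<exists>p. degree p \<le> 2*k+1 \<and>
     (\<forall>l\<le>k. poly ((pderiv ^^ l) p) c = D l c \<and> poly ((pderiv ^^ l) p) d = D l d)"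
proof -
  obtain A where A: "\<forall>l\<le>k. poly ((pderiv ^^ l) A) c = D l c"
    using taylor_poly_exists[of k c "\<lambda>l. D l c"] by blast
  obtain B where B: "\<forall>l\<le>k. poly ((pderiv ^^ l) B) d = D l d"
    using taylor_poly_exists[of k d "\<lambda>l. D l d"] by blast
  define Xc :: "real poly" where "Xc = [:-c, 1:] ^ Suc k"
  define Xd :: "real poly" where "Xd = [:-d, 1:] ^ Suc k"
  define u where "u = fst (bezout_coefficients Xc Xd)"
  define w where "w = snd (bezout_coefficients Xc Xd)"
  have "gcd Xc Xd = 1"
    unfolding Xc_def Xd_def by (rule coprime_imp_gcd_eq_1[OF coprime_linear_powers[OF assms]])
  then have uw: "u * Xc + w * Xd = 1"
    using bezout_coefficients_fst_snd[of Xc Xd] by (simp add: u_def w_def)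
  define p0 where "p0 = A * w * Xd + B * u * Xc"
  define p where "p = p0 mod (Xc * Xd)"
  have p: "p = p0 - (p0 div (Xc * Xd)) * (Xc * Xd)"
    unfolding p_def by (simp add: minus_div_mult_eq_mod)
  have "p - A = Xc * (B * u - A * u - (p0 div (Xc * Xd)) * Xd)"
  proof -
    have "A = A * (u * Xc + w * Xd)" using uw by simp
    then show ?thesis unfolding p p0_def by (simp add: algebra_simps)
  qed
  then have "Xc dvd p - A" by simp
  moreover have "p - B = Xd * (A * w - B * w - (p0 div (Xc * Xd)) * Xc)"
  proof -
    have "B = B * (u * Xc + w * Xd)" using uw by simp
    then show ?thesis unfolding p p0_def by (simp add: algebra_simps)
  qed
  then have "Xd dvd p - B" by simp
  ultimately have "poly ((pderiv ^^ l) p) c = D l c \<and> poly ((pderiv ^^ l) p) d = D l d"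
    if "l \<le> k" for l
    using that A B higher_pderiv_root[of c "Suc k" "p - A" l] higher_pderiv_root[of d "Suc k" "p - B" l]
    by (simp add: Xc_def Xd_def higher_pderiv_diff)
  moreover have "degree (Xc * Xd) = 2*k+2"
    unfolding Xc_def Xd_def by (rule degree_two_point_product)
  then have "degree p \<le> 2*k+1"
    using degree_mod_less[of "Xc * Xd" p0] by (fastforce simp: p_def)
  ultimately show ?thesis by blast
qed

lemma hermite_cell_interpolates:
  assumes "(c::real) \<noteq> d"
  shows "degree (hermite_cell k Df c d) \<le> 2*k+1"
    and "\<And>l. l \<le> k \<Longrightarrow> poly ((pderiv ^^ l) (hermite_cell k Df c d)) c = Df l c \<and>
                        poly ((pderiv ^^ l) (hermite_cell k Df c d)) d = Df l d"
proof -
  have "\<exists>!p. degree p \<le> 2*k+1 \<and>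
     (\<forall>l\<le>k. poly ((pderiv ^^ l) p) c = Df l c \<and> poly ((pderiv ^^ l) p) d = Df l d)"
    using hermite_exists[OF assms] hermite_unique[OF assms] by (rule ex_ex1I) auto
  from theI'[OF this] show "degree (hermite_cell k Df c d) \<le> 2*k+1"
    and "\<And>l. l \<le> k \<Longrightarrow> poly ((pderiv ^^ l) (hermite_cell k Df c d)) c = Df l c \<and>
                        poly ((pderiv ^^ l) (hermite_cell k Df c d)) d = Df l d"
    unfolding hermite_cell_def by auto
qed

section \<open>Absolutely continuous functions\<close>

definition interval_family :: "real \<Rightarrow> real \<Rightarrow> nat \<Rightarrow> (nat \<Rightarrow> real) \<Rightarrow> (nat \<Rightarrow> real) \<Rightarrow> bool" where
  "interval_family c d m u v \<longleftrightarrow>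
     (\<forall>i<m. c \<le> u i \<and> u i \<le> v i \<and> v i \<le> d) \<and>
     (\<forall>i<m. \<forall>j<m. i \<noteq> j \<longrightarrow> v i \<le> u j \<or> v j \<le> u i)"

lemma abs_cont_on_iff:
  "abs_cont_on c d f \<longleftrightarrow>
     (\<forall>e>0. \<exists>\<delta>>0. \<forall>m u v. interval_family c d m u v \<longrightarrow> (\<Sum>i<m. v i - u i) < \<delta> \<longrightarrow>
        (\<Sum>i<m. \<bar>f (v i) - f (u i)\<bar>) < e)"
  unfolding abs_cont_on_def interval_family_def by (simp only: imp_conjL)

lemma abs_cont_onE:
  assumes "abs_cont_on c d f" "e > 0"
  obtains \<delta> where "\<delta> > 0"
    "\<And>m u v. interval_family c d m u v \<Longrightarrow> (\<Sum>i<m. v i - u i) < \<delta> \<Longrightarrow>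
       (\<Sum>i<m. \<bar>f (v i) - f (u i)\<bar>) < e"
proof -
  obtain \<delta> where "\<delta> > 0" and "\<forall>m u v. interval_family c d m u v \<longrightarrow> (\<Sum>i<m. v i - u i) < \<delta> \<longrightarrow>
      (\<Sum>i<m. \<bar>f (v i) - f (u i)\<bar>) < e"
    using assms unfolding abs_cont_on_iff by blast
  then show ?thesis by (intro that) auto
qed

lemma interval_family_mono:
  "interval_family c d m u v \<Longrightarrow> a \<le> c \<Longrightarrow> d \<le> b \<Longrightarrow> interval_family a b m u v"
  unfolding interval_family_def by force

lemma abs_cont_on_subinterval:
  assumes "abs_cont_on a b f" "a \<le> c" "d \<le> b"
  shows "abs_cont_on c d f"
  unfolding abs_cont_on_iff
proof (intro allI impI)
  fix e :: real assume "e > 0"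
  obtain \<delta> where "\<delta> > 0" and \<delta>:
    "\<And>m u v. interval_family a b m u v \<Longrightarrow> (\<Sum>i<m. v i - u i) < \<delta> \<Longrightarrow>
       (\<Sum>i<m. \<bar>f (v i) - f (u i)\<bar>) < e"
    using abs_cont_onE[OF assms(1) \<open>e > 0\<close>] by blast
  show "\<exists>\<delta>>0. \<forall>m u v. interval_family c d m u v \<longrightarrow> (\<Sum>i<m. v i - u i) < \<delta> \<longrightarrow>
      (\<Sum>i<m. \<bar>f (v i) - f (u i)\<bar>) < e"
    using \<open>\<delta> > 0\<close> \<delta> interval_family_mono[OF _ assms(2,3)] by blast
qed

text \<open>An absolutely continuous function is continuous (use a single interval).\<close>

lemma abs_cont_on_imp_continuous_on:
  assumes "abs_cont_on c d f"
  shows "continuous_on {c..d} f"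
  unfolding continuous_on_iff
proof (intro ballI allI impI)
  fix x e :: real assume x: "x \<in> {c..d}" and "e > 0"
  obtain \<delta> where "\<delta> > 0" and \<delta>:
    "\<And>m u v. interval_family c d m u v \<Longrightarrow> (\<Sum>i<m. v i - u i) < \<delta> \<Longrightarrow>
       (\<Sum>i<m. \<bar>f (v i) - f (u i)\<bar>) < e"
    using abs_cont_onE[OF assms \<open>e > 0\<close>] by blast
  show "\<exists>\<delta>>0. \<forall>y\<in>{c..d}. dist y x < \<delta> \<longrightarrow> dist (f y) (f x) < e"
  proof (intro exI[of _ \<delta>] conjI ballI impI)
    fix y assume y: "y \<in> {c..d}" "dist y x < \<delta>"
    have "interval_family c d (Suc 0) (\<lambda>_. min x y) (\<lambda>_. max x y)"
      using x y by (auto simp: interval_family_def)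
    moreover have "(\<Sum>i<Suc 0. max x y - min x y) < \<delta>"
      using y by (simp add: dist_real_def)
    ultimately have "(\<Sum>i<Suc 0. \<bar>f (max x y) - f (min x y)\<bar>) < e"
      by (rule \<delta>)
    then show "dist (f y) (f x) < e"
      by (cases "x \<le> y") (auto simp: dist_real_def abs_minus_commute max_def min_def)
  qed (rule \<open>\<delta> > 0\<close>)
qed

lemma abs_cont_on_dominated:
  assumes f: "abs_cont_on c d f" and g: "abs_cont_on c d g"
    and dom: "\<And>x y. x \<in> {c..d} \<Longrightarrow> y \<in> {c..d} \<Longrightarrow>
                \<bar>F y - F x\<bar> \<le> B * (\<bar>f y - f x\<bar> + \<bar>g y - g x\<bar>)"
  shows "abs_cont_on c d F"
  unfolding abs_cont_on_iff
proof (intro allI impI)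
  fix e :: real assume "e > 0"
  define B' where "B' = \<bar>B\<bar> + 1"
  have "B' > 0" by (simp add: B'_def add_nonneg_pos)
  then have "e / (2 * B') > 0" using \<open>e > 0\<close> by simp
  obtain \<delta>1 where "\<delta>1 > 0" and \<delta>1:
    "\<And>m u v. interval_family c d m u v \<Longrightarrow> (\<Sum>i<m. v i - u i) < \<delta>1 \<Longrightarrow>
       (\<Sum>i<m. \<bar>f (v i) - f (u i)\<bar>) < e / (2 * B')"
    using abs_cont_onE[OF f \<open>e / (2 * B') > 0\<close>] by blast
  obtain \<delta>2 where "\<delta>2 > 0" and \<delta>2:
    "\<And>m u v. interval_family c d m u v \<Longrightarrow> (\<Sum>i<m. v i - u i) < \<delta>2 \<Longrightarrow>
       (\<Sum>i<m. \<bar>g (v i) - g (u i)\<bar>) < e / (2 * B')"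
    using abs_cont_onE[OF g \<open>e / (2 * B') > 0\<close>] by blast
  show "\<exists>\<delta>>0. \<forall>m u v. interval_family c d m u v \<longrightarrow> (\<Sum>i<m. v i - u i) < \<delta> \<longrightarrow>
      (\<Sum>i<m. \<bar>F (v i) - F (u i)\<bar>) < e"
  proof (intro exI[of _ "min \<delta>1 \<delta>2"] conjI allI impI)
    show "min \<delta>1 \<delta>2 > 0" using \<open>\<delta>1 > 0\<close> \<open>\<delta>2 > 0\<close> by simp
    fix m u v assume fam: "interval_family c d m u v" and small: "(\<Sum>i<m. v i - u i) < min \<delta>1 \<delta>2"
    have "(\<Sum>i<m. \<bar>F (v i) - F (u i)\<bar>) \<le>
          (\<Sum>i<m. B' * (\<bar>f (v i) - f (u i)\<bar> + \<bar>g (v i) - g (u i)\<bar>))"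
    proof (rule sum_mono)
      fix i assume "i \<in> {..<m}"
      then have "u i \<in> {c..d}" "v i \<in> {c..d}" using fam by (auto simp: interval_family_def)
      then have "\<bar>F (v i) - F (u i)\<bar> \<le> B * (\<bar>f (v i) - f (u i)\<bar> + \<bar>g (v i) - g (u i)\<bar>)"
        using dom by blast
      also have "\<dots> \<le> B' * (\<bar>f (v i) - f (u i)\<bar> + \<bar>g (v i) - g (u i)\<bar>)"
        unfolding B'_def by (intro mult_right_mono) auto
      finally show "\<bar>F (v i) - F (u i)\<bar> \<le> \<dots>" .
    qed
    also have "\<dots> = B' * ((\<Sum>i<m. \<bar>f (v i) - f (u i)\<bar>) + (\<Sum>i<m. \<bar>g (v i) - g (u i)\<bar>))"
      by (simp add: sum.distrib sum_distrib_left distrib_left)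
    also have "\<dots> < B' * (e / (2 * B') + e / (2 * B'))"
      using \<delta>1[OF fam] \<delta>2[OF fam] small \<open>B' > 0\<close> by (intro mult_strict_left_mono add_strict_mono) auto
    also have "\<dots> = e" using \<open>B' > 0\<close> by (simp add: field_simps)
    finally show "(\<Sum>i<m. \<bar>F (v i) - F (u i)\<bar>) < e" .
  qed
qed

lemma abs_cont_on_id: "abs_cont_on c d (\<lambda>x. x)"
  unfolding abs_cont_on_iff
proof (intro allI impI)
  fix e :: real assume "e > 0"
  show "\<exists>\<delta>>0. \<forall>m u v. interval_family c d m u v \<longrightarrow>
      (\<Sum>i<m. v i - u i) < \<delta> \<longrightarrow> (\<Sum>i<m. \<bar>v i - u i\<bar>) < e"
  proof (intro exI[of _ e] conjI allI impI)
    fix m u v assume "interval_family c d m u v" "(\<Sum>i<m. v i - u i) < e"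
    then have "(\<Sum>i<m. \<bar>v i - u i\<bar>) = (\<Sum>i<m. v i - u i)"
      by (intro sum.cong) (auto simp: interval_family_def)
    with \<open>(\<Sum>i<m. v i - u i) < e\<close> show "(\<Sum>i<m. \<bar>v i - u i\<bar>) < e" by simp
  qed (rule \<open>e > 0\<close>)
qed

lemma abs_cont_on_lipschitz:
  assumes "\<And>x y. x \<in> {c..d} \<Longrightarrow> y \<in> {c..d} \<Longrightarrow> \<bar>f y - f x\<bar> \<le> L * \<bar>y - x\<bar>"
  shows "abs_cont_on c d f"
proof (rule abs_cont_on_dominated[OF abs_cont_on_id abs_cont_on_id])
  fix x y assume "x \<in> {c..d}" "y \<in> {c..d}"
  then have "\<bar>f y - f x\<bar> \<le> L * \<bar>y - x\<bar>" by (rule assms)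
  also have "\<dots> \<le> \<bar>L\<bar> * (\<bar>y - x\<bar> + \<bar>y - x\<bar>)"
    by (simp add: abs_mult_pos mult_right_mono)
  finally show "\<bar>f y - f x\<bar> \<le> \<bar>L\<bar> * (\<bar>y - x\<bar> + \<bar>y - x\<bar>)" .
qed

lemma abs_cont_on_const: "abs_cont_on c d (\<lambda>x. C)"
  by (rule abs_cont_on_lipschitz[of _ _ _ 0]) simp

lemma abs_cont_on_add:
  assumes "abs_cont_on c d f" "abs_cont_on c d g"
  shows "abs_cont_on c d (\<lambda>x. f x + g x)"
  by (rule abs_cont_on_dominated[OF assms, of _ 1]) simp

lemma abs_cont_on_diff:
  assumes "abs_cont_on c d f" "abs_cont_on c d g"
  shows "abs_cont_on c d (\<lambda>x. f x - g x)"
  by (rule abs_cont_on_dominated[OF assms, of _ 1]) simp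

lemma abs_cont_on_mult:
  assumes f: "abs_cont_on c d f" and g: "abs_cont_on c d g"
  shows "abs_cont_on c d (\<lambda>x. f x * g x)"
proof -
  have "compact ((\<lambda>x. \<bar>f x\<bar> + \<bar>g x\<bar>) ` {c..d})"
    using f g by (intro compact_continuous_image continuous_intros abs_cont_on_imp_continuous_on) auto
  then obtain B where B: "\<And>x. x \<in> {c..d} \<Longrightarrow> \<bar>f x\<bar> + \<bar>g x\<bar> \<le> B"
    by (force dest: compact_imp_bounded simp: bounded_iff)
  show ?thesis
  proof (rule abs_cont_on_dominated[OF f g])
    fix x y assume x: "x \<in> {c..d}" and y: "y \<in> {c..d}"
    have "\<bar>f y * g y - f x * g x\<bar> = \<bar>f y * (g y - g x) + g x * (f y - f x)\<bar>"
      by (simp add: algebra_simps)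
    also have "\<dots> \<le> \<bar>f y\<bar> * \<bar>g y - g x\<bar> + \<bar>g x\<bar> * \<bar>f y - f x\<bar>"
      by (metis abs_mult abs_triangle_ineq)
    also have "\<dots> \<le> B * \<bar>g y - g x\<bar> + B * \<bar>f y - f x\<bar>"
      using B[OF x] B[OF y] by (intro add_mono mult_right_mono) auto
    finally show "\<bar>f y * g y - f x * g x\<bar> \<le> B * (\<bar>f y - f x\<bar> + \<bar>g y - g x\<bar>)"
      by (simp add: algebra_simps)
  qed
qed

lemma abs_cont_on_sum:
  assumes "\<And>i. i \<in> I \<Longrightarrow> abs_cont_on c d (f i)"
  shows "abs_cont_on c d (\<lambda>x. \<Sum>i\<in>I. f i x)"
  using assms
proof (induction I rule: infinite_finite_induct)
  case (insert j I)
  then show ?case using abs_cont_on_add[of c d "f j" "\<lambda>x. \<Sum>i\<in>I. f i x"] by simp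
qed (simp_all add: abs_cont_on_const)

text \<open>A function with a continuous derivative on \<open>[c, d]\<close> is Lipschitz there, hence absolutely
  continuous.\<close>

lemma abs_cont_on_C1:
  assumes "\<And>x. x \<in> {c..d} \<Longrightarrow> (f has_real_derivative f' x) (at x within {c..d})"
    and "continuous_on {c..d} f'"
  shows "abs_cont_on c d f"
proof -
  obtain B where B: "\<And>x. x \<in> {c..d} \<Longrightarrow> norm (f' x) \<le> B"
    using compact_imp_bounded[OF compact_continuous_image[OF assms(2) compact_Icc]]
    by (force simp: bounded_iff)
  show ?thesis
  proof (rule abs_cont_on_lipschitz)
    fix x y assume "x \<in> {c..d}" "y \<in> {c..d}"
    then show "\<bar>f y - f x\<bar> \<le> B * \<bar>y - x\<bar>"
      using field_differentiable_bound[OF convex_real_interval(5) assms(1) B] by fastforce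
  qed
qed

lemma abs_cont_on_derivative_chain:
  assumes D: "\<And>l x. l < k \<Longrightarrow> x \<in> {c..d} \<Longrightarrow> (f l has_real_derivative f (Suc l) x) (at x within {c..d})"
    and ac: "abs_cont_on c d (f k)" and "l \<le> k"
  shows "abs_cont_on c d (f l)"
proof (cases "l < k")
  case True
  have "continuous_on {c..d} (f (Suc l))"
  proof (cases "Suc l < k")
    case True
    then show ?thesis using D by (intro DERIV_continuous_on) blast
  next
    case False
    then have "Suc l = k" using \<open>l < k\<close> by simp
    then show ?thesis using abs_cont_on_imp_continuous_on[OF ac] by simp
  qed
  then show ?thesis using D[OF True] by (rule abs_cont_on_C1[rotated])
qed (use ac \<open>l \<le> k\<close> in auto)

lemma has_real_derivative_poly_affine:
  fixes p :: "real poly"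
  assumes "h \<noteq> 0"
  shows "((\<lambda>x. C * poly p ((x - c) / h)) has_real_derivative C * poly (pderiv p) ((x - c) / h) / h)
           (at x within S)"
  using assms by (auto intro!: derivative_eq_intros simp: field_simps)

lemma abs_cont_on_poly_affine:
  fixes p :: "real poly"
  assumes "h \<noteq> 0"
  shows "abs_cont_on a b (\<lambda>x. C * poly p ((x - c) / h))"
proof (rule abs_cont_on_C1)
  show "((\<lambda>x. C * poly p ((x - c) / h)) has_real_derivative C * poly (pderiv p) ((x - c) / h) / h)
          (at x within {a..b})" for x
    by (rule has_real_derivative_poly_affine[OF assms])
  show "continuous_on {a..b} (\<lambda>x. C * poly (pderiv p) ((x - c) / h) / h)"
    by (intro continuous_intros) (use assms in auto)
qed

lemma abs_cont_on_poly: "abs_cont_on a b (poly p)"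
  using abs_cont_on_poly_affine[of 1 a b 1 p 0] by simp

section \<open>The fundamental theorem of calculus for absolutely continuous functions\<close>

lemma tagged_division_interval:
  fixes c d x :: real
  assumes "p tagged_division_of {c..d}" "(x, K) \<in> p"
  shows "K = {Inf K..Sup K}" "Inf K \<le> x" "x \<le> Sup K" "c \<le> Inf K" "Sup K \<le> d"
    and "content K = Sup K - Inf K"
proof -
  obtain u v where K: "K = cbox u v" using tagged_division_ofD(4)[OF assms] by blast
  have "x \<in> K" "K \<subseteq> {c..d}" using tagged_division_ofD(2,3)[OF assms] by auto
  then show "K = {Inf K..Sup K}" "Inf K \<le> x" "x \<le> Sup K" "c \<le> Inf K" "Sup K \<le> d"
    and "content K = Sup K - Inf K"
    using K by auto
qed

lemma tagged_division_nonoverlapping: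
  fixes c d x y :: real
  assumes p: "p tagged_division_of {c..d}" and "(x, K) \<in> p" "(y, L) \<in> p" "(x, K) \<noteq> (y, L)"
    and "content K \<noteq> 0" "content L \<noteq> 0"
  shows "Sup K \<le> Inf L \<or> Sup L \<le> Inf K"
proof (rule ccontr)
  note K = tagged_division_interval[OF p \<open>(x, K) \<in> p\<close>]
  note L = tagged_division_interval[OF p \<open>(y, L) \<in> p\<close>]
  have "interior K \<inter> interior L = {}"
    using tagged_division_ofD(5)[OF p assms(2-4)] .
  then have disj: "{Inf K<..<Sup K} \<inter> {Inf L<..<Sup L} = {}"
    using K(1) L(1) by (metis interior_atLeastAtMost_real)
  assume "\<not> (Sup K \<le> Inf L \<or> Sup L \<le> Inf K)"
  moreover have "Inf K < Sup K" "Inf L < Sup L"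
    using K L assms(5,6) by auto
  ultimately have "(max (Inf K) (Inf L) + min (Sup K) (Sup L)) / 2 \<in> {Inf K<..<Sup K} \<inter> {Inf L<..<Sup L}"
    by auto
  with disj show False by blast
qed

lemma tagged_subfamily_interval_family:
  fixes c d :: real
  assumes p: "p tagged_division_of {c..d}" and "q \<subseteq> p"
  obtains m u v where "interval_family c d m u v"
    "\<And>G :: real \<Rightarrow> real \<Rightarrow> real. (\<And>y. G y y = 0) \<Longrightarrow>
       (\<Sum>(x, K)\<in>q. G (Sup K) (Inf K)) = (\<Sum>i<m. G (v i) (u i))"
proof -
  note I = tagged_division_interval[OF p]
  define q' where "q' = {(x, K) \<in> q. content K \<noteq> 0}"
  have "finite q" using tagged_division_ofD(1)[OF p] \<open>q \<subseteq> p\<close> by (rule finite_subset[rotated])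
  then have "finite q'" unfolding q'_def by (rule finite_subset[rotated]) auto
  define m where "m = card q'"
  define g where "g = from_nat_into q'"
  have g: "bij_betw g {..<m} q'"
    unfolding m_def g_def using \<open>finite q'\<close> by (rule bij_betw_from_nat_into_finite)
  have gp: "(fst (g i), snd (g i)) \<in> p" "content (snd (g i)) \<noteq> 0" if "i < m" for i
    using bij_betw_apply[OF g] that \<open>q \<subseteq> p\<close> by (force simp: q'_def)+
  define u where "u i = Inf (snd (g i))" for i
  define v where "v i = Sup (snd (g i))" for i
  have "\<forall>i<m. c \<le> u i \<and> u i \<le> v i \<and> v i \<le> d"
  proof (intro allI impI)
    fix i assume "i < m"
    show "c \<le> u i \<and> u i \<le> v i \<and> v i \<le> d"
      using I(2-5)[OF gp(1)[OF \<open>i < m\<close>]] unfolding u_def v_def by linarith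
  qed
  moreover have "\<forall>i<m. \<forall>j<m. i \<noteq> j \<longrightarrow> v i \<le> u j \<or> v j \<le> u i"
  proof (intro allI impI)
    fix i j assume "i < m" "j < m" "i \<noteq> j"
    then have "(fst (g i), snd (g i)) \<noteq> (fst (g j), snd (g j))"
      using g by (auto simp: bij_betw_def inj_on_def)
    then show "v i \<le> u j \<or> v j \<le> u i"
      unfolding u_def v_def
      by (rule tagged_division_nonoverlapping[OF p gp(1)[OF \<open>i < m\<close>] gp(1)[OF \<open>j < m\<close>] _
            gp(2)[OF \<open>i < m\<close>] gp(2)[OF \<open>j < m\<close>]])
  qed
  ultimately have "interval_family c d m u v" by (simp add: interval_family_def)
  moreover have "(\<Sum>(x, K)\<in>q. G (Sup K) (Inf K)) = (\<Sum>i<m. G (v i) (u i))"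
    if "\<And>y. G y y = 0" for G :: "real \<Rightarrow> real \<Rightarrow> real"
  proof -
    have "(\<Sum>(x, K)\<in>q. G (Sup K) (Inf K)) = (\<Sum>(x, K)\<in>q'. G (Sup K) (Inf K))"
      using \<open>finite q\<close> \<open>q \<subseteq> p\<close> I(6) that by (intro sum.mono_neutral_right) (auto simp: q'_def)
    also have "\<dots> = (\<Sum>i<m. G (v i) (u i))"
      using sum.reindex_bij_betw[OF g, of "\<lambda>(x, K). G (Sup K) (Inf K)"]
      by (simp add: u_def v_def case_prod_unfold)
    finally show ?thesis .
  qed
  ultimately show ?thesis by (rule that)
qed

lemma abs_cont_on_tagged_division:
  fixes F :: "real \<Rightarrow> real"
  assumes "abs_cont_on c d F" "e > 0"
  obtains \<delta> where "\<delta> > 0"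
    "\<And>p q. p tagged_division_of {c..d} \<Longrightarrow> q \<subseteq> p \<Longrightarrow> (\<Sum>(x, K)\<in>q. content K) < \<delta> \<Longrightarrow>
       (\<Sum>(x, K)\<in>q. \<bar>F (Sup K) - F (Inf K)\<bar>) < e"
proof -
  obtain \<delta> where "\<delta> > 0" and \<delta>:
    "\<And>m u v. interval_family c d m u v \<Longrightarrow> (\<Sum>i<m. v i - u i) < \<delta> \<Longrightarrow>
       (\<Sum>i<m. \<bar>F (v i) - F (u i)\<bar>) < e"
    using abs_cont_onE[OF assms] by blast
  have "(\<Sum>(x, K)\<in>q. \<bar>F (Sup K) - F (Inf K)\<bar>) < e"
    if p: "p tagged_division_of {c..d}" and "q \<subseteq> p" and small: "(\<Sum>(x, K)\<in>q. content K) < \<delta>" for p q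
  proof (rule tagged_subfamily_interval_family[OF p \<open>q \<subseteq> p\<close>])
    fix m u v assume fam: "interval_family c d m u v" and sums: "\<And>G :: real \<Rightarrow> real \<Rightarrow> real.
        (\<And>y. G y y = 0) \<Longrightarrow> (\<Sum>(x, K)\<in>q. G (Sup K) (Inf K)) = (\<Sum>i<m. G (v i) (u i))"
    have "(\<Sum>(x, K)\<in>q. content K) = (\<Sum>(x, K)\<in>q. Sup K - Inf K)"
      using tagged_division_interval(6)[OF p] \<open>q \<subseteq> p\<close> by (intro sum.cong) auto
    then have "(\<Sum>i<m. v i - u i) < \<delta>"
      using sums[of "\<lambda>s t. s - t"] small by simp
    then show "(\<Sum>(x, K)\<in>q. \<bar>F (Sup K) - F (Inf K)\<bar>) < e"
      using \<delta>[OF fam] sums[of "\<lambda>s t. \<bar>F s - F t\<bar>"] by simp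
  qed
  with \<open>\<delta> > 0\<close> show ?thesis by (rule that)
qed

lemma derivative_straddle:
  fixes F :: "real \<Rightarrow> real"
  assumes "(F has_real_derivative f) (at x)" "\<epsilon> > 0"
  obtains r where "r > 0"
    "\<And>u v. u \<le> x \<Longrightarrow> x \<le> v \<Longrightarrow> x - u < r \<Longrightarrow> v - x < r \<Longrightarrow>
       \<bar>(v - u) * f - (F v - F u)\<bar> \<le> \<epsilon> * (v - u)"
proof -
  obtain r where "r > 0" and r: "\<And>y. \<bar>y - x\<bar> < r \<Longrightarrow> \<bar>F y - F x - f * (y - x)\<bar> \<le> \<epsilon> * \<bar>y - x\<bar>"
    using assms unfolding has_field_derivative_def has_derivative_at_alt by force
  have "\<bar>(v - u) * f - (F v - F u)\<bar> \<le> \<epsilon> * (v - u)"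
    if "u \<le> x" "x \<le> v" "x - u < r" "v - x < r" for u v
  proof -
    have "(v - u) * f - (F v - F u) = (F u - F x - f * (u - x)) - (F v - F x - f * (v - x))"
      by (simp add: algebra_simps)
    also have "\<bar>\<dots>\<bar> \<le> \<bar>F u - F x - f * (u - x)\<bar> + \<bar>F v - F x - f * (v - x)\<bar>"
      by (rule abs_triangle_ineq4)
    also have "\<dots> \<le> \<epsilon> * \<bar>u - x\<bar> + \<epsilon> * \<bar>v - x\<bar>"
      using r[of u] r[of v] that by (intro add_mono) auto
    also have "\<dots> = \<epsilon> * (v - u)"
      using that by (simp add: algebra_simps)
    finally show ?thesis .
  qed
  with \<open>r > 0\<close> show ?thesis by (rule that)
qed

lemma riemann_sum_error_split:
  fixes F f :: "real \<Rightarrow> real"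
  assumes "c \<le> d" and p: "p tagged_division_of {c..d}" and "\<epsilon> \<ge> 0"
    and good: "\<And>x K. (x, K) \<in> p \<Longrightarrow> x \<notin> Z \<Longrightarrow>
                 \<bar>content K * f x - (F (Sup K) - F (Inf K))\<bar> \<le> \<epsilon> * content K"
  shows "\<bar>(\<Sum>(x, K)\<in>p. content K * (if x \<in> Z then 0 else f x)) - (F d - F c)\<bar>
           \<le> (\<Sum>(x, K)\<in>{(x, K) \<in> p. x \<in> Z}. \<bar>F (Sup K) - F (Inf K)\<bar>) + \<epsilon> * (d - c)"
proof -
  define T where "T = (\<lambda>(x, K). content K * (if x \<in> Z then 0 else f x) - (F (Sup K) - F (Inf K)))"
  define p1 where "p1 = {(x, K) \<in> p. x \<in> Z}"
  have "finite p" using p by blast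
  have "(\<Sum>(x, K)\<in>p. content K * (if x \<in> Z then 0 else f x)) - (F d - F c) = (\<Sum>xK\<in>p. T xK)"
    using additive_tagged_division_1[OF \<open>c \<le> d\<close> p, of F]
    by (simp add: T_def sum_subtractf case_prod_unfold)
  also have "\<dots> = (\<Sum>xK\<in>p1. T xK) + (\<Sum>xK\<in>p - p1. T xK)"
    using \<open>finite p\<close> by (subst sum.subset_diff[of p1]) (auto simp: p1_def)
  finally have "\<bar>(\<Sum>(x, K)\<in>p. content K * (if x \<in> Z then 0 else f x)) - (F d - F c)\<bar>
      \<le> \<bar>\<Sum>xK\<in>p1. T xK\<bar> + \<bar>\<Sum>xK\<in>p - p1. T xK\<bar>"
    by (simp add: abs_triangle_ineq)
  also have "\<dots> \<le> (\<Sum>xK\<in>p1. \<bar>T xK\<bar>) + (\<Sum>xK\<in>p - p1. \<bar>T xK\<bar>)"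
    by (intro add_mono sum_abs)
  also have "(\<Sum>xK\<in>p1. \<bar>T xK\<bar>) = (\<Sum>(x, K)\<in>p1. \<bar>F (Sup K) - F (Inf K)\<bar>)"
    by (intro sum.cong) (auto simp: T_def p1_def abs_minus_commute)
  also have "(\<Sum>xK\<in>p - p1. \<bar>T xK\<bar>) \<le> (\<Sum>(x, K)\<in>p - p1. \<epsilon> * content K)"
  proof (rule sum_mono)
    fix xK assume "xK \<in> p - p1"
    then obtain x K where "xK = (x, K)" "(x, K) \<in> p" "x \<notin> Z" by (auto simp: p1_def)
    then show "\<bar>T xK\<bar> \<le> (case xK of (x, K) \<Rightarrow> \<epsilon> * content K)"
      using good by (simp add: T_def)
  qed
  also have "\<dots> \<le> (\<Sum>(x, K)\<in>p. \<epsilon> * content K)"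
    using \<open>finite p\<close> \<open>\<epsilon> \<ge> 0\<close> by (intro sum_mono2) auto
  also have "\<dots> = \<epsilon> * (d - c)"
    using additive_content_tagged_division[OF p[folded cbox_interval]] \<open>c \<le> d\<close>
    by (simp add: sum_distrib_left[symmetric] case_prod_unfold)
  finally show ?thesis by (simp add: p1_def)
qed

lemma straddle_gauge:
  fixes F f :: "real \<Rightarrow> real"
  assumes deriv: "\<And>x. x \<in> {c<..<d} \<Longrightarrow> x \<notin> S \<Longrightarrow> (F has_real_derivative f x) (at x)"
    and "\<epsilon> > 0"
  obtains \<gamma> where "gauge \<gamma>"
    "\<And>p x K. p tagged_division_of {c..d} \<Longrightarrow> \<gamma> fine p \<Longrightarrow> (x, K) \<in> p \<Longrightarrow>
       x \<in> {c<..<d} \<Longrightarrow> x \<notin> S \<Longrightarrow> \<bar>content K * f x - (F (Sup K) - F (Inf K))\<bar> \<le> \<epsilon> * content K"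
proof -
  have "\<forall>x. \<exists>r>0. x \<in> {c<..<d} \<and> x \<notin> S \<longrightarrow> (\<forall>u v. u \<le> x \<longrightarrow> x \<le> v \<longrightarrow> x - u < r \<longrightarrow>
          v - x < r \<longrightarrow> \<bar>(v - u) * f x - (F v - F u)\<bar> \<le> \<epsilon> * (v - u))"
    by (metis derivative_straddle[OF deriv \<open>\<epsilon> > 0\<close>] zero_less_one)
  then obtain r where r_pos: "\<And>x. r x > 0" and r: "\<And>x u v. x \<in> {c<..<d} \<Longrightarrow> x \<notin> S \<Longrightarrow>
      u \<le> x \<Longrightarrow> x \<le> v \<Longrightarrow> x - u < r x \<Longrightarrow> v - x < r x \<Longrightarrow>
      \<bar>(v - u) * f x - (F v - F u)\<bar> \<le> \<epsilon> * (v - u)"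
    by metis
  have "gauge (\<lambda>x. ball x (r x))"
    using r_pos by (simp add: gauge_ball_dependent)
  moreover have "\<bar>content K * f x - (F (Sup K) - F (Inf K))\<bar> \<le> \<epsilon> * content K"
    if p: "p tagged_division_of {c..d}" and fine: "(\<lambda>x. ball x (r x)) fine p" and "(x, K) \<in> p"
      and x: "x \<in> {c<..<d}" "x \<notin> S" for p x K
  proof -
    note I = tagged_division_interval[OF p \<open>(x, K) \<in> p\<close>]
    have "Inf K \<in> K" "Sup K \<in> K"
      using I(1-3) by (metis atLeastAtMost_iff order_refl order_trans)+
    moreover have "K \<subseteq> ball x (r x)" using fineD[OF fine \<open>(x, K) \<in> p\<close>] .
    ultimately have "x - Inf K < r x" "Sup K - x < r x"
      using I(2,3) by (auto simp: subset_iff dist_real_def)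
    then show ?thesis
      using r[OF x I(2,3)] I(6) by simp
  qed
  ultimately show ?thesis by (rule that)
qed

lemma negligible_gauge:
  fixes c d :: real
  assumes "negligible Z" "\<delta> > 0"
  obtains \<gamma> where "gauge \<gamma>"
    "\<And>p. p tagged_division_of {c..d} \<Longrightarrow> \<gamma> fine p \<Longrightarrow> (\<Sum>(x, K)\<in>{(x, K) \<in> p. x \<in> Z}. content K) < \<delta>"
proof -
  obtain \<gamma> where "gauge \<gamma>" and \<gamma>: "\<And>p. p tagged_division_of cbox c d \<Longrightarrow> \<gamma> fine p \<Longrightarrow>
      \<bar>\<Sum>(x, K)\<in>p. content K * indicator Z x\<bar> < \<delta>"
    using assms(1)[unfolded negligible_def, rule_format, of c d, unfolded has_integral] assms(2)
    by force
  have "(\<Sum>(x, K)\<in>{(x, K) \<in> p. x \<in> Z}. content K) < \<delta>"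
    if p: "p tagged_division_of {c..d}" and "\<gamma> fine p" for p
  proof -
    have "(\<Sum>(x, K)\<in>{(x, K) \<in> p. x \<in> Z}. content K) = (\<Sum>(x, K)\<in>p. content K * indicator Z x)"
      using p by (intro sum.mono_neutral_cong_left) (auto simp: indicator_def)
    also have "\<dots> < \<delta>"
      using \<gamma>[OF p[folded cbox_interval] \<open>\<gamma> fine p\<close>] by (simp add: abs_less_iff)
    finally show ?thesis .
  qed
  with \<open>gauge \<gamma>\<close> show ?thesis by (rule that)
qed

text \<open>The integrand is redefined
  to be zero on the exceptional set \<open>Z\<close>; on a gauge finer than both gauges above, the two parts
  of the Riemann sum split off by \<open>riemann_sum_error_split\<close> are small.\<close>

theorem fundamental_theorem_of_calculus_abs_cont:
  fixes F f :: "real \<Rightarrow> real"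
  assumes "c \<le> d" and ac: "abs_cont_on c d F" and "negligible S"
    and deriv: "\<And>x. x \<in> {c<..<d} \<Longrightarrow> x \<notin> S \<Longrightarrow> (F has_real_derivative f x) (at x)"
  shows "(f has_integral (F d - F c)) {c..d}"
proof -
  define Z where "Z = insert c (insert d S)"
  have "negligible Z" using \<open>negligible S\<close> by (simp add: Z_def negligible_insert)
  define f0 where "f0 x = (if x \<in> Z then 0 else f x)" for x
  have f0_integral: "(f0 has_integral (F d - F c)) (cbox c d)"
    unfolding has_integral
  proof (intro allI impI)
    fix e :: real assume "e > 0"
    define \<epsilon> where "\<epsilon> = e / (2 * (d - c + 1))"
    have "\<epsilon> > 0" "\<epsilon> * (d - c) < e / 2"
      using \<open>e > 0\<close> \<open>c \<le> d\<close> by (simp_all add: \<epsilon>_def field_simps)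
    obtain \<delta> where "\<delta> > 0" and \<delta>:
      "\<And>p q. p tagged_division_of {c..d} \<Longrightarrow> q \<subseteq> p \<Longrightarrow> (\<Sum>(x, K)\<in>q. content K) < \<delta> \<Longrightarrow>
         (\<Sum>(x, K)\<in>q. \<bar>F (Sup K) - F (Inf K)\<bar>) < e / 2"
      using abs_cont_on_tagged_division[OF ac, of "e / 2"] \<open>e > 0\<close> by auto
    obtain \<gamma>1 where "gauge \<gamma>1" and \<gamma>1: "\<And>p. p tagged_division_of {c..d} \<Longrightarrow> \<gamma>1 fine p \<Longrightarrow>
        (\<Sum>(x, K)\<in>{(x, K) \<in> p. x \<in> Z}. content K) < \<delta>"
      using negligible_gauge[OF \<open>negligible Z\<close> \<open>\<delta> > 0\<close>, where c = c and d = d] by blast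
    obtain \<gamma>2 where "gauge \<gamma>2" and \<gamma>2: "\<And>p x K. p tagged_division_of {c..d} \<Longrightarrow> \<gamma>2 fine p \<Longrightarrow>
        (x, K) \<in> p \<Longrightarrow> x \<in> {c<..<d} \<Longrightarrow> x \<notin> S \<Longrightarrow>
        \<bar>content K * f x - (F (Sup K) - F (Inf K))\<bar> \<le> \<epsilon> * content K"
      using straddle_gauge[OF deriv \<open>\<epsilon> > 0\<close>] by blast
    show "\<exists>\<gamma>. gauge \<gamma> \<and> (\<forall>p. p tagged_division_of cbox c d \<and> \<gamma> fine p \<longrightarrow>
           norm ((\<Sum>(x, K)\<in>p. content K *\<^sub>R f0 x) - (F d - F c)) < e)"
    proof (intro exI conjI allI impI)
      show "gauge (\<lambda>x. \<gamma>1 x \<inter> \<gamma>2 x)"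
        using \<open>gauge \<gamma>1\<close> \<open>gauge \<gamma>2\<close> by (rule gauge_Int)
      fix p assume "p tagged_division_of cbox c d \<and> (\<lambda>x. \<gamma>1 x \<inter> \<gamma>2 x) fine p"
      then have p: "p tagged_division_of {c..d}" and "\<gamma>1 fine p" "\<gamma>2 fine p"
        by (auto simp: fine_Int)
      have "\<bar>content K * f x - (F (Sup K) - F (Inf K))\<bar> \<le> \<epsilon> * content K"
        if "(x, K) \<in> p" "x \<notin> Z" for x K
        using \<gamma>2[OF p \<open>\<gamma>2 fine p\<close> that(1)] tagged_division_interval(2-5)[OF p that(1)] that(2)
        by (auto simp: Z_def)
      then have "\<bar>(\<Sum>(x, K)\<in>p. content K * (if x \<in> Z then 0 else f x)) - (F d - F c)\<bar>
          \<le> (\<Sum>(x, K)\<in>{(x, K) \<in> p. x \<in> Z}. \<bar>F (Sup K) - F (Inf K)\<bar>) + \<epsilon> * (d - c)"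
        by (rule riemann_sum_error_split[OF \<open>c \<le> d\<close> p less_imp_le[OF \<open>\<epsilon> > 0\<close>]])
      moreover have "(\<Sum>(x, K)\<in>{(x, K) \<in> p. x \<in> Z}. \<bar>F (Sup K) - F (Inf K)\<bar>) < e / 2"
        using \<gamma>1[OF p \<open>\<gamma>1 fine p\<close>] by (intro \<delta>[OF p]) auto
      ultimately show "norm ((\<Sum>(x, K)\<in>p. content K *\<^sub>R f0 x) - (F d - F c)) < e"
        using \<open>\<epsilon> * (d - c) < e / 2\<close> by (simp add: f0_def)
    qed
  qed
  show ?thesis
    by (rule has_integral_spike[OF \<open>negligible Z\<close> _ f0_integral[unfolded cbox_interval]])
       (auto simp: f0_def)
qed

section \<open>The Peano kernel\<close>

definition peano_poly :: "nat \<Rightarrow> real poly" where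
  "peano_poly k = smult (1 / fact (2*k+2)) ([:0, 1:] ^ (k+1) * [:1, -1:] ^ (k+1))"

lemma mu_peano_poly: "mu k x = poly ((pderiv ^^ (k+1)) (peano_poly k)) x"
  unfolding mu_def peano_poly_def by simp

lemma peano_poly_vanishes:
  assumes "m \<le> k"
  shows "poly ((pderiv ^^ m) (peano_poly k)) 0 = 0" "poly ((pderiv ^^ m) (peano_poly k)) 1 = 0"
proof -
  have "[:-0, 1:] ^ Suc k dvd peano_poly k"
    unfolding peano_poly_def by (intro dvd_smult dvd_mult2) simp
  then show "poly ((pderiv ^^ m) (peano_poly k)) 0 = 0"
    using higher_pderiv_root[of 0 "Suc k" _ m] assms by simp
  have "[:-1, 1:] dvd [:1, -1 :: real:]"
    by (rule dvdI[of _ _ "[:-1:]"]) simp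
  then have "[:-1, 1:] ^ Suc k dvd peano_poly k"
    unfolding peano_poly_def by (intro dvd_smult dvd_mult) (simp add: dvd_power_same del: power_Suc)
  then show "poly ((pderiv ^^ m) (peano_poly k)) 1 = 0"
    using higher_pderiv_root[of 1 "Suc k" _ m] assms by simp
qed

lemma peano_poly_top_deriv: "(pderiv ^^ (2*k+2)) (peano_poly k) = [:(-1) ^ (k+1):]"
proof -
  define A :: "real poly" where "A = [:0, 1:] ^ (k+1)"
  define B :: "real poly" where "B = [:1, -1:] ^ (k+1)"
  have P: "peano_poly k = smult (1 / fact (2*k+2)) (A * B)"
    by (simp add: peano_poly_def A_def B_def)
  have "degree A = k+1" "coeff A (k+1) = 1"
    unfolding A_def by (simp_all add: degree_linear_power coeff_linear_power del: power_Suc)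
  moreover have "degree B = k+1" "coeff B (k+1) = (-1) ^ (k+1)"
    unfolding B_def by (simp_all add: degree_linear_power_neg coeff_linear_power_neg del: power_Suc)
  ultimately have "degree (A * B) \<le> 2*k+2" "coeff (A * B) (2*k+2) = (-1) ^ (k+1)"
    using degree_mult_le[of A B] coeff_mult_degree_sum[of A B] by (simp_all add: mult_2)
  then have "degree (peano_poly k) \<le> 2*k+2"
    and "coeff (peano_poly k) (2*k+2) = (-1) ^ (k+1) / fact (2*k+2)"
    unfolding P using degree_smult_le order_trans by (blast, simp)
  then show ?thesis
    using higher_pderiv_top[of "peano_poly k" "2*k+2"] by simp
qed

text \<open>The \<open>m\<close>-th derivative of the rescaled kernel \<open>x \<mapsto> h^(2k+2) W((x - c) / h)\<close> belonging to
  the cell \<open>[c, c + h]\<close>.\<close>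

definition peano_kernel :: "nat \<Rightarrow> real \<Rightarrow> real \<Rightarrow> nat \<Rightarrow> real \<Rightarrow> real" where
  "peano_kernel k c h m x = h ^ (2*k+2-m) * poly ((pderiv ^^ m) (peano_poly k)) ((x - c) / h)"

lemma peano_kernel_deriv:
  assumes "h \<noteq> 0" "m < 2*k+2"
  shows "(peano_kernel k c h m has_real_derivative peano_kernel k c h (Suc m) x) (at x)"
proof -
  have "2*k+2-m = Suc (2*k+2 - Suc m)" using assms(2) by simp
  then have "h ^ (2*k+2-m) = h ^ (2*k+2 - Suc m) * h"
    by (metis power_Suc2)
  then show ?thesis
    using has_real_derivative_poly_affine[OF assms(1), of "h ^ (2*k+2-m)" "(pderiv ^^ m) (peano_poly k)" c x UNIV]
    unfolding peano_kernel_def[abs_def] using assms(1) by simp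
qed

lemma abs_cont_on_peano_kernel: "h \<noteq> 0 \<Longrightarrow> abs_cont_on a b (peano_kernel k c h m)"
  unfolding peano_kernel_def[abs_def] by (rule abs_cont_on_poly_affine)

lemma peano_kernel_vanishes:
  assumes "h \<noteq> 0" "m \<le> k"
  shows "peano_kernel k c h m c = 0" "peano_kernel k c h m (c + h) = 0"
  using peano_poly_vanishes[OF assms(2)] assms(1) by (simp_all add: peano_kernel_def)

lemma peano_kernel_top: "peano_kernel k c h (2*k+2) x = (-1) ^ (k+1)"
  unfolding peano_kernel_def peano_poly_top_deriv by simp

lemma peano_kernel_mu: "peano_kernel k c h (k+1) x = h ^ (k+1) * mu k ((x - c) / h)"
proof -
  have "2*k+2 - (k+1) = k+1" by simp
  then show ?thesis by (simp add: peano_kernel_def mu_peano_poly)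
qed

section \<open>Repeated integration by parts\<close>

lemma alternating_telescope:
  fixes a :: "nat \<Rightarrow> real"
  shows "(\<Sum>i\<le>m. (-1) ^ i * (a (Suc i) + a i)) = a 0 + (-1) ^ m * a (Suc m)"
  by (induction m) (auto simp: algebra_simps)

lemma alternating_product_rule:
  fixes u w :: "nat \<Rightarrow> real \<Rightarrow> real"
  assumes "\<And>i. i \<le> m \<Longrightarrow> (u i has_real_derivative u (Suc i) x) (at x)"
    and "\<And>i. i \<le> m \<Longrightarrow> (w (Suc i) has_real_derivative w i x) (at x)"
  shows "((\<lambda>y. \<Sum>i\<le>m. (-1) ^ i * (u i y * w (Suc i) y)) has_real_derivative
           u 0 x * w 0 x + (-1) ^ m * (u (Suc m) x * w (Suc m) x)) (at x)"
proof -
  have "((\<lambda>y. \<Sum>i\<le>m. (-1) ^ i * (u i y * w (Suc i) y)) has_real_derivative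
          (\<Sum>i\<le>m. (-1) ^ i * (u (Suc i) x * w (Suc i) x + u i x * w i x))) (at x)"
    using assms by (intro DERIV_sum DERIV_cmult) (auto intro!: derivative_eq_intros simp: mult.commute)
  then show ?thesis
    using alternating_telescope[of "\<lambda>i. u i x * w i x" m] by simp
qed

text \<open>Derivatives are only needed outside a negligible
  set, since the antiderivative is absolutely continuous.\<close>

lemma repeated_integration_by_parts:
  fixes u w :: "nat \<Rightarrow> real \<Rightarrow> real"
  assumes "c \<le> d" "negligible S"
    and u': "\<And>i x. i \<le> m \<Longrightarrow> x \<in> {c<..<d} \<Longrightarrow> x \<notin> S \<Longrightarrow> (u i has_real_derivative u (Suc i) x) (at x)"
    and w': "\<And>i x. i \<le> m \<Longrightarrow> x \<in> {c<..<d} \<Longrightarrow> x \<notin> S \<Longrightarrow> (w (Suc i) has_real_derivative w i x) (at x)"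
    and ac: "\<And>i. i \<le> m \<Longrightarrow> abs_cont_on c d (u i)" "\<And>i. i \<le> m \<Longrightarrow> abs_cont_on c d (w (Suc i))"
    and ends: "\<And>i. i \<le> m \<Longrightarrow> u i c * w (Suc i) c = 0" "\<And>i. i \<le> m \<Longrightarrow> u i d * w (Suc i) d = 0"
  shows "((\<lambda>x. u 0 x * w 0 x + (-1) ^ m * (u (Suc m) x * w (Suc m) x)) has_integral 0) {c..d}"
proof -
  define K where "K y = (\<Sum>i\<le>m. (-1) ^ i * (u i y * w (Suc i) y))" for y
  have "abs_cont_on c d K"
    unfolding K_def using ac
    by (intro abs_cont_on_sum abs_cont_on_mult abs_cont_on_const) auto
  moreover have "(K has_real_derivative u 0 x * w 0 x + (-1) ^ m * (u (Suc m) x * w (Suc m) x)) (at x)"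
    if "x \<in> {c<..<d}" "x \<notin> S" for x
    unfolding K_def by (rule alternating_product_rule) (use u' w' that in auto)
  ultimately have "((\<lambda>x. u 0 x * w 0 x + (-1) ^ m * (u (Suc m) x * w (Suc m) x)) has_integral K d - K c) {c..d}"
    by (rule fundamental_theorem_of_calculus_abs_cont[OF \<open>c \<le> d\<close> _ \<open>negligible S\<close>])
  moreover have "K c = 0" "K d = 0"
    unfolding K_def using ends by (auto intro!: sum.neutral)
  ultimately show ?thesis by simp
qed

section \<open>The error on a single cell\<close>

text \<open>The kernel of order \<open>k+1\<close> is orthogonal to the \<open>(k+1)\<close>-st derivative of every polynomial
  of degree at most \<open>2k+1\<close>: integrate by parts \<open>k+1\<close> times, using \<open>P\<^sup>(\<^sup>2\<^sup>k\<^sup>+\<^sup>2\<^sup>) = 0\<close>.\<close>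

lemma peano_kernel_orthogonal:
  fixes P :: "real poly"
  assumes "c < d" "degree P \<le> 2*k+1"
  shows "((\<lambda>x. poly ((pderiv ^^ Suc k) P) x * peano_kernel k c (d - c) (k+1) x) has_integral 0) {c..d}"
proof -
  define h where "h = d - c"
  have "h \<noteq> 0" "c + h = d" "c \<le> d" using \<open>c < d\<close> by (auto simp: h_def)
  define V where "V = peano_kernel k c h"
  define Pl where "Pl l = poly ((pderiv ^^ l) P)" for l
  have d_Pl: "(Pl l has_real_derivative Pl (Suc l) x) (at x)" for l x
    unfolding Pl_def funpow.simps(2) comp_def by (rule poly_DERIV)
  have V_deriv: "(V m has_real_derivative V (Suc m) x) (at x)" if "m < 2*k+2" for m x
    unfolding V_def using peano_kernel_deriv[OF \<open>h \<noteq> 0\<close> that] .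
  have ac_V: "abs_cont_on c d (V m)" for m
    unfolding V_def using abs_cont_on_peano_kernel[OF \<open>h \<noteq> 0\<close>] .
  have V_ends: "V m c = 0" "V m d = 0" if "m \<le> k" for m
    using peano_kernel_vanishes[OF \<open>h \<noteq> 0\<close> that] \<open>c + h = d\<close> by (auto simp: V_def)
  have "Pl (2*k+2) = (\<lambda>x. 0)"
    unfolding Pl_def using higher_pderiv_beyond_degree[of P "2*k+2"] assms(2)
    by (simp add: fun_eq_iff)
  then have "((\<lambda>x. Pl (Suc k) x * V (k+1) x) has_integral 0) {c..d}"
    using repeated_integration_by_parts[OF \<open>c \<le> d\<close> negligible_empty, of k "\<lambda>i. Pl (k+1+i)"
        "\<lambda>j. V (Suc k - j)"]
      d_Pl V_deriv ac_V V_ends Pl_def abs_cont_on_poly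
    by (auto simp: Suc_diff_le mult_2)
  then show ?thesis by (simp add: Pl_def V_def h_def)
qed

text \<open>The error \<open>\<psi> = \<phi> - P\<close> and its first \<open>k\<close> derivatives vanish at both ends, and so do the
  kernel functions of order at most \<open>k\<close>; integrating by parts \<open>k+1\<close> times against the kernel
  leaves \<open>\<integral> \<psi>\<close>, while the contribution of \<open>P\<^sup>(\<^sup>k\<^sup>+\<^sup>1\<^sup>)\<close> vanishes by orthogonality.\<close>

lemma hermite_cell_error:
  fixes Df :: "nat \<Rightarrow> real \<Rightarrow> real" and g :: "real \<Rightarrow> real" and P :: "real poly"
  assumes "c < d"
    and D: "\<And>l x. l < k \<Longrightarrow> x \<in> {c..d} \<Longrightarrow>
              (Df l has_real_derivative Df (Suc l) x) (at x within {c..d})"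
    and ac: "abs_cont_on c d (Df k)"
    and "negligible S"
    and g: "\<And>x. x \<in> {c<..<d} \<Longrightarrow> x \<notin> S \<Longrightarrow> (Df k has_real_derivative g x) (at x)"
    and "degree P \<le> 2*k+1"
    and interp: "\<And>l. l \<le> k \<Longrightarrow> poly ((pderiv ^^ l) P) c = Df l c \<and> poly ((pderiv ^^ l) P) d = Df l d"
  shows "((\<lambda>x. peano_kernel k c (d - c) (k+1) x * g x) has_integral
           integral {c..d} (Df 0) - integral {c..d} (poly P)) {c..d}"
proof -
  define h where "h = d - c"
  have "h \<noteq> 0" "c \<le> d" using \<open>c < d\<close> by (auto simp: h_def)
  define V where "V = peano_kernel k c h"
  define Pl where "Pl l = poly ((pderiv ^^ l) P)" for l
  define \<psi> where "\<psi> l x = Df l x - Pl l x" for l x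
  have ac_Df: "abs_cont_on c d (Df l)" if "l \<le> k" for l
    using D ac that by (rule abs_cont_on_derivative_chain)
  have ac_\<psi>: "abs_cont_on c d (\<psi> l)" if "l \<le> k" for l
    unfolding \<psi>_def[abs_def] Pl_def using ac_Df[OF that] by (intro abs_cont_on_diff abs_cont_on_poly)
  have d_Pl: "(Pl l has_real_derivative Pl (Suc l) x) (at x)" for l x
    unfolding Pl_def funpow.simps(2) comp_def by (rule poly_DERIV)
  have d_\<psi>: "(\<psi> l has_real_derivative \<psi> (Suc l) x) (at x)" if "l < k" "x \<in> {c<..<d}" for l x
  proof -
    have "(Df l has_real_derivative Df (Suc l) x) (at x)"
      using D[OF that(1), of x] that(2) at_within_Icc_at[of c x d] by auto
    then show ?thesis unfolding \<psi>_def[abs_def] by (intro DERIV_diff d_Pl)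
  qed
  have d_\<psi>k: "(\<psi> k has_real_derivative g x - Pl (Suc k) x) (at x)" if "x \<in> {c<..<d}" "x \<notin> S" for x
    unfolding \<psi>_def[abs_def] by (intro DERIV_diff d_Pl g that)
  have \<psi>_ends: "\<psi> l c = 0" "\<psi> l d = 0" if "l \<le> k" for l
    using interp[OF that] by (simp_all add: \<psi>_def Pl_def)
  have V_deriv: "(V m has_real_derivative V (Suc m) x) (at x)" if "m < 2*k+2" for m x
    unfolding V_def using peano_kernel_deriv[OF \<open>h \<noteq> 0\<close> that] .
  have ac_V: "abs_cont_on c d (V m)" for m
    unfolding V_def using abs_cont_on_peano_kernel[OF \<open>h \<noteq> 0\<close>] .
  \<comment> \<open>\<open>k+1\<close> integrations by parts move all derivatives from \<open>\<psi>\<close> onto the kernel;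
      the last one uses \<open>\<psi>\<^sub>k' = g - P\<^sup>(\<^sup>k\<^sup>+\<^sup>1\<^sup>)\<close>, valid outside \<open>S\<close>.\<close>
  have parts_\<psi>: "((\<lambda>x. V (k+1) x * (g x - Pl (Suc k) x) + (-1) ^ k * (V (2*k+2) x * \<psi> 0 x))
      has_integral 0) {c..d}"
    using repeated_integration_by_parts[OF \<open>c \<le> d\<close> \<open>negligible S\<close>, of k "\<lambda>i. V (k+1+i)"
        "\<lambda>j. if j = 0 then (\<lambda>x. g x - Pl (Suc k) x) else \<psi> (Suc k - j)"]
      V_deriv ac_V ac_\<psi> \<psi>_ends d_\<psi> d_\<psi>k
    by (auto simp: Suc_diff_le mult_2)
  have "(-1) ^ k * (V (2*k+2) x * \<psi> 0 x) = - \<psi> 0 x" for x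
    unfolding V_def peano_kernel_top by (simp add: minus_one_mult_self mult.assoc[symmetric])
  note parts_\<psi> = parts_\<psi>[unfolded this]
  have parts_P: "((\<lambda>x. Pl (Suc k) x * V (k+1) x) has_integral 0) {c..d}"
    using peano_kernel_orthogonal[OF \<open>c < d\<close> \<open>degree P \<le> 2*k+1\<close>] by (simp add: Pl_def V_def h_def)
  have "(Df 0 has_integral integral {c..d} (Df 0)) {c..d}"
    using abs_cont_on_imp_continuous_on[OF ac_Df[of 0]]
    by (intro integrable_integral integrable_continuous_interval) auto
  moreover have "(poly P has_integral integral {c..d} (poly P)) {c..d}"
    using abs_cont_on_imp_continuous_on[OF abs_cont_on_poly]
    by (intro integrable_integral integrable_continuous_interval)
  ultimately have "(\<psi> 0 has_integral integral {c..d} (Df 0) - integral {c..d} (poly P)) {c..d}"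
    unfolding \<psi>_def[abs_def] Pl_def by (simp add: has_integral_diff)
  from has_integral_add[OF has_integral_add[OF parts_\<psi> parts_P] this]
  show ?thesis
    by (simp add: V_def h_def algebra_simps)
qed

section \<open>The uniform grid and the main theorem\<close>

lemma AE_lborel_negligibleE:
  assumes "AE x in lborel. P x"
  obtains S where "negligible S" "\<And>x. x \<notin> S \<Longrightarrow> P x"
proof -
  from assms obtain S where S: "{x \<in> space lborel. \<not> P x} \<subseteq> S" "emeasure lborel S = 0" "S \<in> sets lborel"
    by (rule AE_E)
  then have "S \<in> null_sets lborel" by (simp add: null_sets_def)
  then have "negligible S"
    using negligible_iff_null_sets null_sets_completionI by blast
  moreover have "\<And>x. x \<notin> S \<Longrightarrow> P x" using S(1) by auto
  ultimately show ?thesis by (rule that)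
qed

lemma has_integral_consecutive_cells:
  fixes f :: "real \<Rightarrow> real"
  assumes "h \<ge> 0"
    and "\<And>j. j < n \<Longrightarrow> (f has_integral I j) {a + real j * h .. a + real (Suc j) * h}"
  shows "(f has_integral (\<Sum>j<n. I j)) {a .. a + real n * h}"
  using assms(2)
proof (induction n)
  case 0
  then show ?case using has_integral_refl(2)[of f a] by simp
next
  case (Suc n)
  have "(f has_integral (\<Sum>j<n. I j) + I n) {a .. a + real (Suc n) * h}"
    using Suc by (intro has_integral_combine) (use \<open>h \<ge> 0\<close> in \<open>auto simp: algebra_simps\<close>)
  then show ?case by simp
qed

definition grid_point :: "real \<Rightarrow> real \<Rightarrow> nat \<Rightarrow> nat \<Rightarrow> real" where
  "grid_point a b N j = a + real j * ((b - a) / real N)"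

lemma grid_cell_floor:
  assumes "h > 0" "x \<in> {a + real j * h ..< a + real (Suc j) * h}"
  shows "\<lfloor>(x - a) / h\<rfloor> = int j" "frac ((x - a) / h) = (x - (a + real j * h)) / h"
proof -
  have "real j \<le> (x - a) / h" "(x - a) / h < real j + 1"
    using assms by (auto simp: field_simps)
  then show "\<lfloor>(x - a) / h\<rfloor> = int j" by (simp add: floor_eq_iff)
  then show "frac ((x - a) / h) = (x - (a + real j * h)) / h"
    using assms(1) by (simp add: frac_def field_simps)
qed

lemma periodic_kernel_on_cell:
  assumes "h > 0" "x \<in> {a + real j * h ..< a + real (Suc j) * h}"
  shows "h ^ (k+1) * E k ((x - a) / h) = peano_kernel k (a + real j * h) h (k+1) x"
  using grid_cell_floor(2)[OF assms] peano_kernel_mu[of k "a + real j * h" h x] by (simp add: E_def)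

lemma hermite_pw_on_cell:
  assumes "a < b" "j < N" "x \<in> {grid_point a b N j ..< grid_point a b N (Suc j)}"
  shows "hermite_pw k a b N Df x = poly (hermite_cell k Df (grid_point a b N j) (grid_point a b N (Suc j))) x"
proof -
  have "(b - a) / real N > 0" using assms by simp
  then have "cell_index a b N x = j"
    using grid_cell_floor(1)[of "(b - a) / real N" x a j] assms by (simp add: cell_index_def grid_point_def)
  then show ?thesis by (simp add: hermite_pw_def grid_point_def)
qed

lemma hermite_grid_cell:
  fixes Df :: "nat \<Rightarrow> real \<Rightarrow> real" and g :: "real \<Rightarrow> real"
  assumes "a < b" "j < N"
    and D: "\<And>l x. l < k \<Longrightarrow> x \<in> {a..b} \<Longrightarrow>
              (Df l has_real_derivative Df (Suc l) x) (at x within {a..b})"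
    and ac: "abs_cont_on a b (Df k)" and "negligible S"
    and g: "\<And>x. x \<in> {a<..<b} \<Longrightarrow> x \<notin> S \<Longrightarrow> (Df k has_real_derivative g x) (at x)"
  defines "h \<equiv> (b - a) / real N" and "c \<equiv> grid_point a b N j" and "d \<equiv> grid_point a b N (Suc j)"
  shows "(Df 0 has_integral integral {c..d} (Df 0)) {c..d}"
    and "(hermite_pw k a b N Df has_integral integral {c..d} (poly (hermite_cell k Df c d))) {c..d}"
    and "((\<lambda>x. h ^ (k+1) * (E k ((x - a) / h) * g x)) has_integral
           integral {c..d} (Df 0) - integral {c..d} (poly (hermite_cell k Df c d))) {c..d}"
proof -
  have "h > 0" using \<open>a < b\<close> \<open>j < N\<close> by (simp add: h_def)
  have cd: "c = a + real j * h" "d = a + real (Suc j) * h"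
    unfolding c_def d_def grid_point_def h_def by simp_all
  then have "d = c + h" "c < d" "c \<noteq> d" "a \<le> c" using \<open>h > 0\<close> by (simp_all add: algebra_simps)
  have "real (Suc j) * h \<le> real N * h" using \<open>j < N\<close> \<open>h > 0\<close> by (intro mult_right_mono) auto
  moreover have "real N * h = b - a" using \<open>j < N\<close> by (simp add: h_def)
  ultimately have "d \<le> b" by (simp add: cd)
  have sub: "{c..d} \<subseteq> {a..b}" using \<open>a \<le> c\<close> \<open>d \<le> b\<close> by auto
  have cell_pt: "x \<in> {a + real j * h ..< a + real (Suc j) * h}" if "x \<in> {c..d} - {d}" for x
    using that by (simp add: cd)
  define P where "P = hermite_cell k Df c d"
  have "continuous_on {a..b} (Df 0)"
    using abs_cont_on_imp_continuous_on[OF abs_cont_on_derivative_chain[OF D ac, of 0]] by simp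
  then show "(Df 0 has_integral integral {c..d} (Df 0)) {c..d}"
    using sub by (intro integrable_integral integrable_continuous_interval) (rule continuous_on_subset)
  have "(poly P has_integral integral {c..d} (poly P)) {c..d}"
    using abs_cont_on_imp_continuous_on[OF abs_cont_on_poly]
    by (intro integrable_integral integrable_continuous_interval)
  then show "(hermite_pw k a b N Df has_integral integral {c..d} (poly P)) {c..d}"
  proof (rule has_integral_spike[OF negligible_sing[of d], rotated])
    fix x assume "x \<in> {c..d} - {d}"
    then show "hermite_pw k a b N Df x = poly P x"
      using hermite_pw_on_cell[OF \<open>a < b\<close> \<open>j < N\<close>, of x k Df, folded c_def d_def] by (simp add: P_def)
  qed
  have "((\<lambda>x. peano_kernel k c (d - c) (k+1) x * g x) has_integral
           integral {c..d} (Df 0) - integral {c..d} (poly P)) {c..d}"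
    unfolding P_def
  proof (rule hermite_cell_error[OF \<open>c < d\<close> _ _ \<open>negligible S\<close>])
    show "(Df l has_real_derivative Df (Suc l) x) (at x within {c..d})" if "l < k" "x \<in> {c..d}" for l x
      using has_field_derivative_subset[OF D[OF that(1) subsetD[OF sub that(2)]] sub] .
    show "abs_cont_on c d (Df k)"
      using ac \<open>a \<le> c\<close> \<open>d \<le> b\<close> by (rule abs_cont_on_subinterval)
    show "(Df k has_real_derivative g x) (at x)" if "x \<in> {c<..<d}" "x \<notin> S" for x
      using g[of x] that \<open>a \<le> c\<close> \<open>d \<le> b\<close> by simp
  qed (fact hermite_cell_interpolates[OF \<open>c \<noteq> d\<close>])+
  then show "((\<lambda>x. h ^ (k+1) * (E k ((x - a) / h) * g x)) has_integral
           integral {c..d} (Df 0) - integral {c..d} (poly P)) {c..d}"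
  proof (rule has_integral_spike[OF negligible_sing[of d], rotated])
    fix x assume "x \<in> {c..d} - {d}"
    then have "h ^ (k+1) * E k ((x - a) / h) = peano_kernel k c (d - c) (k+1) x"
      using periodic_kernel_on_cell[OF \<open>h > 0\<close> cell_pt] \<open>d = c + h\<close> by (simp add: cd)
    then show "h ^ (k+1) * (E k ((x - a) / h) * g x) = peano_kernel k c (d - c) (k+1) x * g x"
      by simp
  qed
qed

text \<open>The main theorem: add up the cellwise identities.\<close>

theorem mainTheorem8:
  fixes k N :: nat and a b :: real and phi :: "real \<Rightarrow> real"
    and Df :: "nat \<Rightarrow> real \<Rightarrow> real" and g :: "real \<Rightarrow> real"
  assumes "a < b" and "N \<ge> 1"
    and "Df 0 = phi"
    and "\<And>l x. l < k \<Longrightarrow> x \<in> {a..b} \<Longrightarrow>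
           (Df l has_real_derivative Df (Suc l) x) (at x within {a..b})"
    and "continuous_on {a..b} (Df k)"
    and "abs_cont_on a b (Df k)"
    and "AE x in lborel. x \<in> {a<..<b} \<longrightarrow> (Df k has_real_derivative g x) (at x)"
  shows "integral {a..b} (hermite_pw k a b N Df) =
           integral {a..b} phi
           - ((b - a) / real N) ^ (k+1) *
             integral {a..b} (\<lambda>x. E k ((x - a) / ((b - a) / real N)) * g x)"
proof -
  define h where "h = (b - a) / real N"
  obtain S where "negligible S" and g': "\<And>x. x \<in> {a<..<b} \<Longrightarrow> x \<notin> S \<Longrightarrow> (Df k has_real_derivative g x) (at x)"
    using AE_lborel_negligibleE[OF assms(7)] by metis
  define c where "c j = grid_point a b N j" for j
  define IF where "IF j = integral {c j..c (Suc j)} (Df 0)" for j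
  define IP where "IP j = integral {c j..c (Suc j)} (poly (hermite_cell k Df (c j) (c (Suc j))))" for j
  have "h > 0" "a + real N * h = b" using assms(1,2) by (simp_all add: h_def)
  have c: "c j = a + real j * h" for j by (simp add: c_def grid_point_def h_def)
  have cell: "(Df 0 has_integral IF j) {c j..c (Suc j)}"
    "(hermite_pw k a b N Df has_integral IP j) {c j..c (Suc j)}"
    "((\<lambda>x. h ^ (k+1) * (E k ((x - a) / h) * g x)) has_integral IF j - IP j) {c j..c (Suc j)}"
    if "j < N" for j
    using hermite_grid_cell[OF \<open>a < b\<close> that assms(4,6) \<open>negligible S\<close> g']
    by (simp_all add: IF_def IP_def c_def h_def)
  have "(phi has_integral (\<Sum>j<N. IF j)) {a..b}"
    and "(hermite_pw k a b N Df has_integral (\<Sum>j<N. IP j)) {a..b}"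
    and sum_E: "((\<lambda>x. h ^ (k+1) * (E k ((x - a) / h) * g x)) has_integral (\<Sum>j<N. IF j - IP j)) {a..b}"
    using has_integral_consecutive_cells[OF less_imp_le[OF \<open>h > 0\<close>], of N] cell
      \<open>a + real N * h = b\<close> assms(3) unfolding c by auto
  moreover have "((\<lambda>x. E k ((x - a) / h) * g x) has_integral (\<Sum>j<N. IF j - IP j) / h ^ (k+1)) {a..b}"
    using has_integral_cmul[OF sum_E, of "1 / h ^ (k+1)"] \<open>h > 0\<close> by simp
  ultimately show ?thesis
    using \<open>h > 0\<close> by (simp add: integral_unique sum_subtractf h_def[symmetric])
qed

end
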